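(* The Hasse index of order 3 of the class of Dyck lattices is asymptotically Boolean, i.e. $i_3(\mathcal{D}_n)=\frac{sc_3(\mathcal{D}_n)}{|\mathcal{D}_n|}\sim\frac{n^3}{8}$ as $n\to\infty$.
   Context: A Dyck path of semilength $n$ is a lattice path from $(0,0)$ to $(2n,0)$ with steps $(1,1)$ and $(1,-1)$ never going below the $x$-axis. $\mathcal{D}_n$ is the set of Dyck paths of semilength $n$ ordered by containment: $\gamma\le\gamma'$ iff $\gamma$ lies weakly below $\gamma'$. A saturated chain of length $h$ is a sequence $\gamma^{(0)}<\cdots<\gamma^{(h)}$ in which each element covers the previous one; $sc_h(\mathcal{P})$ is the number of saturated chains of length $h$ in a poset $\mathcal{P}$, and the Hasse index of order $h$ is $i_h(\mathcal{P})=sc_h(\mathcal{P})/|\mathcal{P}|$. A sequence of posets $(\mathcal{P}_n)$ has asymptotically Boolean Hasse index of order $h$ if $i_h(\mathcal{P}_n)\sim n^h/2^h$. *)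

theory Defs
  imports Complex_Main "HOL-Library.Landau_Symbols"
begin

definition covers :: "'a set \<Rightarrow> ('a \<Rightarrow> 'a \<Rightarrow> bool) \<Rightarrow> 'a \<Rightarrow> 'a \<Rightarrow> bool" where
  "covers P lt x y \<longleftrightarrow> x \<in> P \<and> y \<in> P \<and> lt x y \<and> \<not> (\<exists>z\<in>P. lt x z \<and> lt z y)"

definition sat_chains :: "'a set \<Rightarrow> ('a \<Rightarrow> 'a \<Rightarrow> bool) \<Rightarrow> nat \<Rightarrow> 'a list set" where
  "sat_chains P lt h = {cs. length cs = Suc h \<and> set cs \<subseteq> P \<and>
      (\<forall>i<h. covers P lt (cs ! i) (cs ! Suc i))}"

definition sc :: "'a set \<Rightarrow> ('a \<Rightarrow> 'a \<Rightarrow> bool) \<Rightarrow> nat \<Rightarrow> nat" where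
  "sc P lt h = card (sat_chains P lt h)"

definition hasse_index :: "'a set \<Rightarrow> ('a \<Rightarrow> 'a \<Rightarrow> bool) \<Rightarrow> nat \<Rightarrow> real" where
  "hasse_index P lt h = real (sc P lt h) / real (card P)"

text \<open>Dyck paths: lists of steps, True = up step (1,1), False = down step (1,-1).\<close>
definition height :: "bool list \<Rightarrow> nat \<Rightarrow> int" where
  "height xs i = (\<Sum>b\<leftarrow>take i xs. if b then 1 else -1)"

definition dyck :: "nat \<Rightarrow> bool list set" where
  "dyck n = {xs. length xs = 2 * n \<and> (\<forall>i\<le>2 * n. 0 \<le> height xs i) \<and> height xs (2 * n) = 0}"

definition dyck_le :: "bool list \<Rightarrow> bool list \<Rightarrow> bool" where
  "dyck_le xs ys \<longleftrightarrow> length xs = length ys \<and> (\<forall>i\<le>length xs. height xs i \<le> height ys i)"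

definition dyck_lt :: "bool list \<Rightarrow> bool list \<Rightarrow> bool" where
  "dyck_lt xs ys \<longleftrightarrow> dyck_le xs ys \<and> xs \<noteq> ys"

end

theory Submission
  imports Defs "HOL-Real_Asymp.Real_Asymp"
begin

text \<open>An upper cover of a Dyck path turns one valley DU into a peak UD, so a path with v valleys
  has exactly v upper covers, each with between v - 1 and v + 1 valleys. Hence sc_3(D_n) lies
  between the sums of v (v - 1) (v - 2) and v (v + 1) (v + 2) over D_n, and i_3(D_n) equals the
  third moment of v up to a term of the order of its second moment.

  The first two moments of v are exact binomial sums by the cycle lemma: the 2 n + 1 rotations of
  U followed by a Dyck path of semilength n are exactly the words with n + 1 up steps and n down
  steps, each arising once, and the number of cyclic valleys of such a word is v + 1. Summing
  indicators of cyclic valleys over subsets gives mean (n - 1) / 2 and variance about n / 8, and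
  since v deviates from its mean by at most 2 n, the third moment is (n / 2)^3 + O(n^2).\<close>

section \<open>Saturated chains of length three\<close>

definition upper_covers :: "'a set \<Rightarrow> ('a \<Rightarrow> 'a \<Rightarrow> bool) \<Rightarrow> 'a \<Rightarrow> 'a set" where
  "upper_covers P lt x = {y. covers P lt x y}"

lemma upper_covers_subset: "upper_covers P lt x \<subseteq> P"
  by (auto simp: upper_covers_def covers_def)

lemma sat_chains_3_eq:
  "sat_chains P lt 3 = (\<lambda>(a, b, c, d). [a, b, c, d]) `
     (SIGMA a:P. SIGMA b:upper_covers P lt a. SIGMA c:upper_covers P lt b. upper_covers P lt c)"
  (is "?L = ?f ` ?S")
proof
  show "?L \<subseteq> ?f ` ?S"
  proof
    fix cs assume cs: "cs \<in> ?L"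
    then obtain a b c d where abcd: "cs = [a, b, c, d]"
      by (auto simp: sat_chains_def length_Suc_conv numeral_eq_Suc)
    have "\<forall>i<3. covers P lt (cs ! i) (cs ! Suc i)"
      using cs by (simp add: sat_chains_def)
    then have "covers P lt a b" "covers P lt b c" "covers P lt c d"
      by (auto simp: abcd numeral_eq_Suc)
    moreover have "a \<in> P"
      using cs abcd by (simp add: sat_chains_def)
    ultimately show "cs \<in> ?f ` ?S"
      by (force simp: abcd upper_covers_def)
  qed
  show "?f ` ?S \<subseteq> ?L"
    by (auto simp: sat_chains_def upper_covers_def covers_def less_Suc_eq numeral_eq_Suc)
qed

lemma sc_3_eq_sum:
  assumes "finite P"
  shows "sc P lt 3 = (\<Sum>a\<in>P. \<Sum>b\<in>upper_covers P lt a. \<Sum>c\<in>upper_covers P lt b.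
      card (upper_covers P lt c))"
proof -
  have fin: "finite (upper_covers P lt x)" for x
    using finite_subset[OF upper_covers_subset assms] .
  have inj: "inj (\<lambda>(a, b, c, d). [a, b, c, d] :: 'a list)"
    by (auto simp: inj_def)
  have "sc P lt 3 =
      card (SIGMA a:P. SIGMA b:upper_covers P lt a. SIGMA c:upper_covers P lt b. upper_covers P lt c)"
    unfolding sc_def sat_chains_3_eq by (rule card_image[OF inj_on_subset[OF inj]]) simp
  also have "\<dots> = (\<Sum>a\<in>P. \<Sum>b\<in>upper_covers P lt a. \<Sum>c\<in>upper_covers P lt b.
      card (upper_covers P lt c))"
    using assms fin by (simp add: card_SigmaI)
  finally show ?thesis .
qed

lemma consecutive_products_le:
  fixes x y :: nat
  shows "y \<le> x + 1 \<Longrightarrow> real y * (real y + 1) \<le> (real x + 1) * (real x + 2)"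
    and "x \<le> y + 1 \<Longrightarrow> 1 \<le> x \<Longrightarrow> (real x - 1) * (real x - 2) \<le> real y * (real y - 1)"
proof -
  assume "y \<le> x + 1"
  then show "real y * (real y + 1) \<le> (real x + 1) * (real x + 2)"
    by (intro mult_mono) auto
next
  assume "x \<le> y + 1" "1 \<le> x"
  then consider "x = 1" | "real x - 1 \<le> real y" "1 \<le> real x - 1"
    by linarith
  then show "(real x - 1) * (real x - 2) \<le> real y * (real y - 1)"
  proof cases
    case 1
    then show ?thesis
      by (cases y) auto
  next
    case 2
    then show ?thesis
      by (intro mult_mono) auto
  qed
qed

lemma sc_3_bounds:
  fixes v :: "'a \<Rightarrow> nat"
  assumes fin: "finite P"
    and card_uc: "\<And>x. x \<in> P \<Longrightarrow> card (upper_covers P lt x) = v x"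
    and v_covers: "\<And>x y. covers P lt x y \<Longrightarrow> v x \<le> v y + 1 \<and> v y \<le> v x + 1"
  shows "(\<Sum>x\<in>P. real (v x) * (real (v x) - 1) * (real (v x) - 2)) \<le> real (sc P lt 3)"
    and "real (sc P lt 3) \<le> (\<Sum>x\<in>P. real (v x) * (real (v x) + 1) * (real (v x) + 2))"
proof -
  define U where "U = upper_covers P lt"
  define T where "T b = (\<Sum>c\<in>U b. real (v c))" for b
  have U_P: "y \<in> P" and v_U: "v x \<le> v y + 1 \<and> v y \<le> v x + 1" if "y \<in> U x" for x y
    using that v_covers by (auto simp: U_def upper_covers_def covers_def)
  have card_U: "real (card (U x)) = real (v x)" if "x \<in> P" for x
    using card_uc[OF that] by (simp add: U_def)
  have sc: "real (sc P lt 3) = (\<Sum>a\<in>P. \<Sum>b\<in>U a. T b)"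
    unfolding sc_3_eq_sum[OF fin] T_def U_def[symmetric] of_nat_sum
    using U_P card_uc by (intro sum.cong refl) (simp add: U_def)
  have T: "real (v b) * (real (v b) - 1) \<le> T b \<and> T b \<le> real (v b) * (real (v b) + 1)"
    if "b \<in> P" for b
    using sum_bounded_below[of "U b" "real (v b) - 1" "\<lambda>c. real (v c)"]
      sum_bounded_above[of "U b" "\<lambda>c. real (v c)" "real (v b) + 1"] v_U[of _ b] card_U[OF that]
    unfolding T_def by fastforce
  show "real (sc P lt 3) \<le> (\<Sum>x\<in>P. real (v x) * (real (v x) + 1) * (real (v x) + 2))"
    unfolding sc
  proof (intro sum_mono)
    fix a assume a: "a \<in> P"
    have "(\<Sum>b\<in>U a. T b) \<le> (\<Sum>b\<in>U a. (real (v a) + 1) * (real (v a) + 2))"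
      using T U_P v_U consecutive_products_le(1) by (intro sum_mono) (meson order_trans)
    then show "(\<Sum>b\<in>U a. T b) \<le> real (v a) * (real (v a) + 1) * (real (v a) + 2)"
      using card_U[OF a] by (simp add: mult.assoc)
  qed
  show "(\<Sum>x\<in>P. real (v x) * (real (v x) - 1) * (real (v x) - 2)) \<le> real (sc P lt 3)"
    unfolding sc
  proof (intro sum_mono)
    fix a assume a: "a \<in> P"
    have "v a \<ge> 1" if "b \<in> U a" for b
    proof -
      have "finite (U a)"
        unfolding U_def using finite_subset[OF upper_covers_subset fin] .
      with that have "card (U a) \<noteq> 0"
        by auto
      with card_uc[OF a] show ?thesis
        by (simp add: U_def)
    qed
    then have "(\<Sum>b\<in>U a. (real (v a) - 1) * (real (v a) - 2)) \<le> (\<Sum>b\<in>U a. T b)"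
      using T U_P v_U consecutive_products_le(2) by (intro sum_mono) (meson order_trans)
    then show "real (v a) * (real (v a) - 1) * (real (v a) - 2) \<le> (\<Sum>b\<in>U a. T b)"
      using card_U[OF a] by (simp add: mult.assoc)
  qed
qed

section \<open>Heights of lattice words\<close>

definition level :: "bool list \<Rightarrow> int" where
  "level xs = (\<Sum>b\<leftarrow>xs. if b then 1 else -1)"

lemma height_eq_level: "height xs i = level (take i xs)"
  by (simp add: height_def level_def)

lemma level_simps [simp]:
  "level [] = 0"
  "level (b # xs) = (if b then 1 else -1) + level xs"
  "level (xs @ ys) = level xs + level ys"
  by (simp_all add: level_def)

lemma height_0 [simp]: "height xs 0 = 0"
  by (simp add: height_eq_level)

lemma height_Suc:
  "i < length xs \<Longrightarrow> height xs (Suc i) = height xs i + (if xs ! i then 1 else -1)"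
  by (simp add: height_eq_level take_Suc_conv_app_nth)

lemma height_Cons_Suc: "height (b # xs) (Suc i) = (if b then 1 else -1) + height xs i"
  by (simp add: height_eq_level)

lemma even_height_add_index: "i \<le> length xs \<Longrightarrow> even (height xs i + int i)"
  by (induction i) (simp_all add: height_Suc)

lemma even_height_diff:
  "i \<le> length xs \<Longrightarrow> i \<le> length ys \<Longrightarrow> even (height xs i - height ys i)"
  using even_height_add_index[of i xs] even_height_add_index[of i ys] by presburger

lemma eq_if_heights_eq:
  assumes "length xs = length ys" "\<And>i. i \<le> length xs \<Longrightarrow> height xs i = height ys i"
  shows "xs = ys"
proof (rule nth_equalityI)
  fix i assume i: "i < length xs"
  then have "height xs (Suc i) - height xs i = height ys (Suc i) - height ys i"
    using assms by simp
  then show "xs ! i = ys ! i"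
    using height_Suc[OF i] height_Suc[of i ys] i assms(1) by (auto split: if_splits)
qed (fact assms)

lemma dyck_length: "xs \<in> dyck n \<Longrightarrow> length xs = 2 * n"
  by (simp add: dyck_def)

lemma level_dyck:
  assumes "xs \<in> dyck n"
  shows "level xs = 0"
proof -
  have "take (2 * n) xs = xs"
    using assms by (simp add: dyck_length)
  with assms show ?thesis
    by (simp add: dyck_def height_eq_level)
qed

lemma finite_dyck: "finite (dyck n)"
proof (rule finite_subset)
  show "dyck n \<subseteq> {xs. set xs \<subseteq> UNIV \<and> length xs = 2 * n}"
    by (auto simp: dyck_def)
  show "finite {xs. set xs \<subseteq> (UNIV :: bool set) \<and> length xs = 2 * n}"
    by (rule finite_lists_length_eq) simp
qed

lemma dyck_last_step_down:
  assumes "xs \<in> dyck n" "n \<ge> 1"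
  shows "\<not> xs ! (2 * n - 1)"
proof
  assume "xs ! (2 * n - 1)"
  then have "height xs (2 * n) = height xs (2 * n - 1) + 1"
    using height_Suc[of "2 * n - 1" xs] assms by (simp add: dyck_length)
  moreover have "0 \<le> height xs (2 * n - 1)" "height xs (2 * n) = 0"
    using assms(1) by (auto simp: dyck_def)
  ultimately show False
    by simp
qed

section \<open>Valleys and covers in the Dyck lattice\<close>

definition valleys :: "bool list \<Rightarrow> nat set" where
  "valleys xs = {i. Suc i < length xs \<and> \<not> xs ! i \<and> xs ! Suc i}"

definition nvalleys :: "bool list \<Rightarrow> nat" where
  "nvalleys xs = card (valleys xs)"

definition flip_valley :: "bool list \<Rightarrow> nat \<Rightarrow> bool list" where
  "flip_valley xs i = xs[i := True, Suc i := False]"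

lemma valleys_subset: "valleys xs \<subseteq> {..<length xs}"
  by (auto simp: valleys_def)

lemma finite_valleys [simp]: "finite (valleys xs)"
  using finite_subset[OF valleys_subset] by blast

lemma nvalleys_le_length: "nvalleys xs \<le> length xs"
  unfolding nvalleys_def using card_mono[OF _ valleys_subset] by fastforce

lemma length_flip_valley [simp]: "length (flip_valley xs i) = length xs"
  by (simp add: flip_valley_def)

lemma nth_flip_valley:
  "i \<in> valleys xs \<Longrightarrow> j < length xs \<Longrightarrow>
    flip_valley xs i ! j = (if j = Suc i then False else if j = i then True else xs ! j)"
  by (auto simp: flip_valley_def nth_list_update valleys_def)

lemma height_flip_valley:
  assumes "i \<in> valleys xs" "k \<le> length xs"
  shows "height (flip_valley xs i) k = height xs k + (if k = Suc i then 2 else 0)"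
  using assms(2)
proof (induction k)
  case (Suc k)
  then have "k < length xs" by simp
  with Suc assms(1) show ?case
    using height_Suc[of k xs] height_Suc[of k "flip_valley xs i"] nth_flip_valley[OF assms(1)]
    by (auto simp: valleys_def)
qed simp

lemma flip_valley_in_dyck:
  assumes "xs \<in> dyck n" "i \<in> valleys xs"
  shows "flip_valley xs i \<in> dyck n"
proof -
  have "Suc i < 2 * n"
    using assms by (simp add: valleys_def dyck_length)
  then show ?thesis
    using assms height_flip_valley[OF assms(2)] by (simp add: dyck_def)
qed

lemma dyck_le_flip_valley:
  "i \<in> valleys xs \<Longrightarrow> dyck_le xs (flip_valley xs i)"
  by (simp add: dyck_le_def height_flip_valley)

lemma flip_valley_neq: "i \<in> valleys xs \<Longrightarrow> xs \<noteq> flip_valley xs i"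
proof
  assume "i \<in> valleys xs" "xs = flip_valley xs i"
  then show False
    using height_flip_valley[of i xs "Suc i"] by (auto simp: valleys_def)
qed

text \<open>Heights at a fixed position have fixed parity.\<close>

lemma between_flip_valley:
  assumes v: "i \<in> valleys xs" and lo: "dyck_le xs z" and hi: "dyck_le z (flip_valley xs i)"
  shows "z = xs \<or> z = flip_valley xs i"
proof -
  have len: "length z = length xs"
    using lo by (simp add: dyck_le_def)
  have bounds: "height xs k \<le> height z k \<and> height z k \<le> height xs k + (if k = Suc i then 2 else 0)"
    if "k \<le> length xs" for k
    using lo hi that height_flip_valley[OF v that] len by (auto simp: dyck_le_def)
  have "Suc i \<le> length xs"
    using v by (simp add: valleys_def)
  then have "height z (Suc i) = height xs (Suc i) \<or> height z (Suc i) = height xs (Suc i) + 2"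
    using bounds[of "Suc i"] even_height_diff[of "Suc i" z xs] len by presburger
  then show ?thesis
  proof
    assume "height z (Suc i) = height xs (Suc i)"
    then have "height z k = height xs k" if "k \<le> length z" for k
      using bounds[of k] that len by (cases "k = Suc i") auto
    then show ?thesis
      using eq_if_heights_eq len by blast
  next
    assume "height z (Suc i) = height xs (Suc i) + 2"
    then have "height z k = height (flip_valley xs i) k" if "k \<le> length z" for k
      using bounds[of k] that len height_flip_valley[OF v, of k] by (cases "k = Suc i") auto
    then show ?thesis
      using eq_if_heights_eq[of z "flip_valley xs i"] len by simp
  qed
qed

lemma covers_flip_valley:
  assumes "xs \<in> dyck n" "i \<in> valleys xs"
  shows "covers (dyck n) dyck_lt xs (flip_valley xs i)"
  unfolding covers_def
proof (intro conjI)
  show "flip_valley xs i \<in> dyck n"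
    using assms by (rule flip_valley_in_dyck)
  show "dyck_lt xs (flip_valley xs i)"
    using assms(2) dyck_le_flip_valley flip_valley_neq by (simp add: dyck_lt_def)
  show "\<not> (\<exists>z\<in>dyck n. dyck_lt xs z \<and> dyck_lt z (flip_valley xs i))"
    using between_flip_valley[OF assms(2)] unfolding dyck_lt_def by blast
qed (fact assms)

text \<open>Take a position where xs lies strictly below ys and xs is as low as possible there:
  xs must step down into it and up out of it, and raising this valley by 2 keeps xs below ys
  because heights at a fixed position differ by an even number.\<close>

lemma exists_flip_valley_below:
  assumes xs: "xs \<in> dyck n" and ys: "ys \<in> dyck n" and lt: "dyck_lt xs ys"
  obtains i where "i \<in> valleys xs" "dyck_le (flip_valley xs i) ys"
proof -
  have len: "length xs = 2 * n" "length ys = 2 * n"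
    using xs ys by (simp_all add: dyck_length)
  have le: "height xs k \<le> height ys k" if "k \<le> 2 * n" for k
    using lt that len by (auto simp: dyck_lt_def dyck_le_def)
  define K where "K = {k. k \<le> 2 * n \<and> height xs k < height ys k}"
  have "K \<noteq> {}"
  proof
    assume "K = {}"
    then have "height xs k = height ys k" if "k \<le> 2 * n" for k
      using le[OF that] that unfolding K_def by fastforce
    then have "xs = ys"
      using len by (intro eq_if_heights_eq) simp_all
    with lt show False
      by (simp add: dyck_lt_def)
  qed
  moreover have "finite K"
    by (simp add: K_def)
  ultimately obtain k where kK: "k \<in> K" and kmin: "\<And>k'. k' \<in> K \<Longrightarrow> height xs k \<le> height xs k'"
    using arg_min_if_finite[of K "height xs"] by (metis not_le)
  have k: "k \<le> 2 * n" "height xs k < height ys k"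
    using kK by (auto simp: K_def)
  have "k \<noteq> 0"
    using k by (cases k) auto
  moreover have "k \<noteq> 2 * n"
    using k xs ys by (auto simp: dyck_def)
  ultimately obtain i where ki: "k = Suc i" and i: "Suc i < 2 * n"
    using k(1) by (metis le_neq_implies_less not0_implies_Suc)
  have down: "\<not> xs ! i"
  proof
    assume "xs ! i"
    then have "i \<in> K" "height xs k = height xs i + 1"
      using k ki i len height_Suc[of i xs] height_Suc[of i ys] by (auto simp: K_def split: if_splits)
    then show False
      using kmin[of i] by simp
  qed
  have up: "xs ! k"
  proof (rule ccontr)
    assume "\<not> xs ! k"
    then have "Suc k \<in> K" "height xs (Suc k) = height xs k - 1"
      using k ki i len height_Suc[of k xs] height_Suc[of k ys] by (auto simp: K_def split: if_splits)
    then show False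
      using kmin[of "Suc k"] by simp
  qed
  have valley: "i \<in> valleys xs"
    using down up ki i len by (simp add: valleys_def)
  have "height xs k + 2 \<le> height ys k"
    using k even_height_diff[of k ys xs] len by presburger
  then have "dyck_le (flip_valley xs i) ys"
    using le len ki by (auto simp: dyck_le_def height_flip_valley[OF valley])
  with valley that show thesis
    by blast
qed

lemma covers_imp_flip_valley:
  assumes "covers (dyck n) dyck_lt xs ys"
  shows "\<exists>i\<in>valleys xs. ys = flip_valley xs i"
proof -
  have xs: "xs \<in> dyck n" and ys: "ys \<in> dyck n" and lt: "dyck_lt xs ys"
    and nothing_between: "\<not> (\<exists>z\<in>dyck n. dyck_lt xs z \<and> dyck_lt z ys)"
    using assms by (auto simp: covers_def)
  obtain i where i: "i \<in> valleys xs" and below: "dyck_le (flip_valley xs i) ys"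
    using exists_flip_valley_below[OF xs ys lt] .
  have "flip_valley xs i = ys"
    using nothing_between flip_valley_in_dyck[OF xs i] covers_flip_valley[OF xs i] below
    by (auto simp: covers_def dyck_lt_def)
  with i show ?thesis
    by blast
qed

lemma inj_on_flip_valley: "inj_on (flip_valley xs) (valleys xs)"
proof (rule inj_onI)
  fix i j assume i: "i \<in> valleys xs" and j: "j \<in> valleys xs"
    and eq: "flip_valley xs i = flip_valley xs j"
  have "flip_valley xs i ! i" "flip_valley xs j ! i \<longleftrightarrow> i = j"
    using i j nth_flip_valley[OF i, of i] nth_flip_valley[OF j, of i] by (auto simp: valleys_def)
  with eq show "i = j"
    by simp
qed

lemma upper_covers_dyck:
  "xs \<in> dyck n \<Longrightarrow> upper_covers (dyck n) dyck_lt xs = flip_valley xs ` valleys xs"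
  unfolding upper_covers_def using covers_imp_flip_valley covers_flip_valley by blast

lemma card_upper_covers_dyck:
  "xs \<in> dyck n \<Longrightarrow> card (upper_covers (dyck n) dyck_lt xs) = nvalleys xs"
  by (simp add: upper_covers_dyck card_image inj_on_flip_valley nvalleys_def)

lemma nvalleys_flip_valley:
  assumes v: "i \<in> valleys xs"
  shows "nvalleys xs \<le> nvalleys (flip_valley xs i) + 1" "nvalleys (flip_valley xs i) \<le> nvalleys xs + 1"
proof -
  have v': "Suc i < length xs" "\<not> xs ! i" "xs ! Suc i"
    using v by (auto simp: valleys_def)
  have kept: "valleys xs - {i} \<subseteq> valleys (flip_valley xs i)"
    using v' by (auto simp: valleys_def nth_flip_valley[OF v] split: if_splits)
  have "valleys (flip_valley xs i) \<subseteq> (valleys xs - {i}) \<union> {i - 1, Suc i}"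
    using v' by (auto simp: valleys_def nth_flip_valley[OF v] split: if_splits)
  then have "nvalleys (flip_valley xs i) \<le> card ((valleys xs - {i}) \<union> {i - 1, Suc i})"
    unfolding nvalleys_def by (intro card_mono) simp_all
  also have "\<dots> \<le> card (valleys xs - {i}) + card {i - 1, Suc i}"
    by (rule card_Un_le)
  also have "\<dots> \<le> card (valleys xs - {i}) + 2"
    by (simp add: card_insert_if)
  finally have "nvalleys (flip_valley xs i) \<le> card (valleys xs - {i}) + 2" .
  moreover have "card (valleys xs - {i}) + 1 = nvalleys xs"
    using v card_Suc_Diff1[OF finite_valleys v] by (simp add: nvalleys_def)
  moreover have "card (valleys xs - {i}) \<le> nvalleys (flip_valley xs i)"
    using kept by (simp add: nvalleys_def card_mono)
  ultimately show "nvalleys xs \<le> nvalleys (flip_valley xs i) + 1"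
    "nvalleys (flip_valley xs i) \<le> nvalleys xs + 1"
    by linarith+
qed

lemma nvalleys_covers:
  assumes "covers (dyck n) dyck_lt xs ys"
  shows "nvalleys xs \<le> nvalleys ys + 1 \<and> nvalleys ys \<le> nvalleys xs + 1"
  using covers_imp_flip_valley[OF assms] nvalleys_flip_valley by blast

section \<open>Cyclic valleys and the cycle lemma\<close>

definition ncyclic_valleys :: "bool list \<Rightarrow> nat" where
  "ncyclic_valleys w = card {i. i < length w \<and> \<not> w ! i \<and> w ! (Suc i mod length w)}"

definition level_one_words :: "nat \<Rightarrow> bool list set" where
  "level_one_words n = {w. length w = 2 * n + 1 \<and> level w = 1}"

text \<open>As a count of adjacent pairs, cyclic valleys are visibly invariant under rotation.\<close>

lemma ncyclic_valleys_eq_count_list: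
  "ncyclic_valleys w = count_list (zip w (rotate1 w)) (False, True)"
  unfolding ncyclic_valleys_def count_list_eq_length_filter length_filter_conv_card
  by (intro arg_cong[where f = card]) (auto simp: nth_rotate1)

lemma rotate_zip:
  "length xs = length ys \<Longrightarrow> rotate n (zip xs ys) = zip (rotate n xs) (rotate n ys)"
proof (induction n)
  case (Suc n)
  have rotate1_zip: "rotate1 (zip as bs) = zip (rotate1 as) (rotate1 bs)"
    if "length as = length bs" for as :: "'a list" and bs :: "'b list"
    using that by (cases as; cases bs) auto
  show ?case
    using Suc rotate1_zip[of "rotate n xs" "rotate n ys"] by simp
qed simp

lemma count_list_rotate [simp]: "count_list (rotate n xs) x = count_list xs x"
proof -
  have "count_list xs x = count_list (drop k xs) x + count_list (take k xs) x" for k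
    by (metis append_take_drop_id count_list_append add.commute)
  then show ?thesis
    by (simp add: rotate_drop_take)
qed

lemma rotate_cancel:
  assumes "rotate a u = rotate b u'" "length u = L" "length u' = L" "b \<le> a" "a < L"
  shows "rotate (a - b) u = u'"
proof -
  have "rotate (L - b) (rotate a u) = rotate (L - b) (rotate b u')"
    using assms(1) by simp
  moreover have "rotate (L - b) (rotate b u') = u'"
    using assms by (simp add: rotate_rotate)
  moreover have "L - b + a = (a - b) + L"
    using assms(4,5) by simp
  then have "(L - b + a) mod L = a - b"
    using assms(5) by (metis mod_add_self2 mod_less less_imp_diff_less)
  then have "rotate (L - b) (rotate a u) = rotate (a - b) u"
    using assms(2) rotate_conv_mod[of "L - b + a" u] by (simp add: rotate_rotate)
  ultimately show ?thesis
    by simp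
qed

lemma ncyclic_valleys_rotate [simp]: "ncyclic_valleys (rotate n w) = ncyclic_valleys w"
  by (simp add: ncyclic_valleys_eq_count_list rotate1_rotate_swap rotate_zip[symmetric])

lemma level_rotate [simp]: "level (rotate n w) = level w"
proof -
  have "level w = level (drop k w) + level (take k w)" for k
    by (metis append_take_drop_id level_simps(3) add.commute)
  then show ?thesis
    by (simp add: rotate_drop_take)
qed

lemma ncyclic_valleys_Cons_dyck:
  assumes xs: "xs \<in> dyck n" and n: "n \<ge> 1"
  shows "ncyclic_valleys (True # xs) = nvalleys xs + 1"
proof -
  let ?w = "True # xs"
  have len: "length xs = 2 * n"
    using xs by (rule dyck_length)
  have "?w ! (2 * n) = xs ! (2 * n - 1)"
    using n by (cases n) auto
  then have "{i. i < length ?w \<and> \<not> ?w ! i \<and> ?w ! (Suc i mod length ?w)} =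
      insert (2 * n) (Suc ` valleys xs)"
    using len dyck_last_step_down[OF xs n]
  proof (intro set_eqI iffI)
    fix i assume "i \<in> {i. i < length ?w \<and> \<not> ?w ! i \<and> ?w ! (Suc i mod length ?w)}"
    then have i: "i \<le> 2 * n" "\<not> ?w ! i" "?w ! (Suc i mod (2 * n + 1))"
      using len by auto
    then obtain j where j: "i = Suc j"
      by (cases i) auto
    show "i \<in> insert (2 * n) (Suc ` valleys xs)"
    proof (cases "i = 2 * n")
      case False
      then have "j \<in> valleys xs"
        using i j len by (auto simp: valleys_def)
      with j show ?thesis
        by blast
    qed simp
  qed (use len in \<open>auto simp: valleys_def\<close>)
  moreover have "2 * n \<notin> Suc ` valleys xs"
    using len by (auto simp: valleys_def)
  ultimately show ?thesis
    by (simp add: ncyclic_valleys_def nvalleys_def card_image)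
qed

lemma height_Cons_dyck_pos:
  assumes "xs \<in> dyck n" "1 \<le> p" "p \<le> 2 * n + 1"
  shows "1 \<le> height (True # xs) p"
proof -
  obtain q where "p = Suc q" "q \<le> 2 * n"
    using assms(2,3) by (cases p) auto
  then show ?thesis
    using assms(1) height_Cons_Suc[of True xs q] by (auto simp: dyck_def)
qed

text \<open>All nonempty prefixes of True # g have positive level, whereas for 0 < j the prefix of
  length 2 n + 1 - j of its rotation by j has level 1 - height (True # g) j \<le> 0.\<close>

lemma rotate_Cons_dyck_eq:
  assumes g: "g \<in> dyck n" and g': "g' \<in> dyck n" and j: "j < 2 * n + 1"
    and eq: "rotate j (True # g) = True # g'"
  shows "j = 0"
proof (rule ccontr)
  assume "j \<noteq> 0"
  let ?u = "True # g"
  have "length ?u = 2 * n + 1"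
    using g by (simp add: dyck_length)
  then have "True # g' = drop j ?u @ take j ?u"
    using eq j by (simp add: rotate_drop_take)
  then have "take (2 * n + 1 - j) (True # g') = drop j ?u"
    using \<open>length ?u = 2 * n + 1\<close> by simp
  then have "height (True # g') (2 * n + 1 - j) = 1 - height ?u j"
    using level_dyck[OF g] append_take_drop_id[of j ?u] level_simps(3)[of "take j ?u" "drop j ?u"]
    by (simp add: height_eq_level)
  moreover have "1 \<le> height (True # g') (2 * n + 1 - j)" "1 \<le> height ?u j"
    using height_Cons_dyck_pos[OF g'] height_Cons_dyck_pos[OF g] j \<open>j \<noteq> 0\<close> by simp_all
  ultimately show False
    by simp
qed

lemma obtain_last_minimum:
  fixes f :: "nat \<Rightarrow> 'a::linorder"
  assumes "0 < L"
  obtains j where "j < L" "\<And>k. k < L \<Longrightarrow> f j \<le> f k" "\<And>k. j < k \<Longrightarrow> k < L \<Longrightarrow> f j < f k"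
proof -
  define M where "M = Min (f ` {..<L})"
  define j where "j = Max {k. k < L \<and> f k = M}"
  have M_le: "M \<le> f k" if "k < L" for k
    using that by (simp add: M_def)
  have "M \<in> f ` {..<L}"
    using assms unfolding M_def by (intro Min_in) auto
  then have "j \<in> {k. k < L \<and> f k = M}"
    unfolding j_def by (intro Max_in) auto
  then have j: "j < L" "f j = M"
    by auto
  have "f k \<noteq> M" if "j < k" "k < L" for k
  proof
    assume "f k = M"
    then have "k \<le> j"
      unfolding j_def using that by (intro Max_ge) auto
    with that show False
      by simp
  qed
  then show thesis
    using that[OF j(1)] M_le j(2) by (metis order.not_eq_order_implies_strict)
qed

lemma heights_rotate_last_minimum:
  assumes lev: "level w = 1" and j: "j < length w"
    and min: "\<And>k. k < length w \<Longrightarrow> height w j \<le> height w k"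
    and last: "\<And>k. j < k \<Longrightarrow> k < length w \<Longrightarrow> height w j < height w k"
    and p: "1 \<le> p" "p \<le> length w"
  shows "1 \<le> height (rotate j w) p"
proof -
  let ?H = "height w"
  have u: "rotate j w = drop j w @ take j w"
    using j by (simp add: rotate_drop_take)
  have "?H j \<le> 0"
    using min[of 0] j by (cases w) simp_all
  show ?thesis
  proof (cases "p \<le> length w - j")
    case True
    then have "take (j + p) w = take j w @ take p (rotate j w)"
      using u by (simp add: take_add)
    then have hu: "height (rotate j w) p = ?H (j + p) - ?H j"
      by (simp add: height_eq_level)
    show ?thesis
    proof (cases "p = length w - j")
      case True
      then have "?H (j + p) = 1"
        using j lev by (simp add: height_eq_level)
      with hu \<open>?H j \<le> 0\<close> show ?thesis
        by simp
    next
      case False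
      then have "j + p < length w"
        using \<open>p \<le> length w - j\<close> j by arith
      then show ?thesis
        using hu last[of "j + p"] p by simp
    qed
  next
    case False
    define q where "q = p - (length w - j)"
    have q: "q \<le> j"
      using False p j by (simp add: q_def)
    have "take p (rotate j w) = drop j w @ take q w"
      using u False q by (simp add: take_append q_def min_def)
    moreover have "level (drop j w) = 1 - ?H j"
      using lev append_take_drop_id[of j w] level_simps(3)[of "take j w" "drop j w"]
      by (simp add: height_eq_level)
    ultimately have "height (rotate j w) p = 1 - ?H j + ?H q"
      by (simp add: height_eq_level)
    with min[of q] q j show ?thesis
      by simp
  qed
qed

lemma Cons_dyck_if_heights_pos:
  assumes len: "length u = 2 * n + 1" and lev: "level u = 1"
    and pos: "\<And>p. 1 \<le> p \<Longrightarrow> p \<le> 2 * n + 1 \<Longrightarrow> 1 \<le> height u p"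
  obtains g where "u = True # g" "g \<in> dyck n"
proof -
  obtain x g where u: "u = x # g"
    using len by (cases u) auto
  have x: "x"
    using pos[of 1] u by (auto simp: height_eq_level split: if_splits)
  have "g \<in> dyck n"
    unfolding dyck_def
  proof (intro CollectI conjI allI impI)
    show "length g = 2 * n"
      using len u by simp
    show "0 \<le> height g q" if "q \<le> 2 * n" for q
      using pos[of "Suc q"] that u x height_Cons_Suc by simp
    have "height u (2 * n + 1) = 1"
      using len lev by (simp add: height_eq_level)
    then show "height g (2 * n) = 0"
      using u x height_Cons_Suc[of x g "2 * n"] by simp
  qed
  with u x that show thesis
    by blast
qed

lemma rotate_to_Cons_dyck:
  assumes w: "w \<in> level_one_words n"
  obtains g k where "g \<in> dyck n" "k < 2 * n + 1" "rotate k (True # g) = w"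
proof -
  let ?L = "2 * n + 1"
  have lw: "length w = ?L" and lev: "level w = 1"
    using w by (auto simp: level_one_words_def)
  obtain j where j: "j < ?L" and min: "\<And>k. k < ?L \<Longrightarrow> height w j \<le> height w k"
    and last: "\<And>k. j < k \<Longrightarrow> k < ?L \<Longrightarrow> height w j < height w k"
    using obtain_last_minimum[of ?L "height w"] by auto
  obtain g where g: "rotate j w = True # g" "g \<in> dyck n"
    using Cons_dyck_if_heights_pos[of "rotate j w" n] heights_rotate_last_minimum[OF lev] j min last lw
    by (auto simp: lev)
  define k where "k = (?L - j) mod ?L"
  have "(k + j) mod length w = 0"
    using j lw by (simp add: k_def mod_add_left_eq)
  then have "rotate k (True # g) = w"
    by (simp flip: g(1) add: rotate_rotate)
  moreover have "k < ?L"
    by (simp add: k_def)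
  ultimately show thesis
    using g(2) that by blast
qed

lemma inj_on_rotate_Cons_dyck:
  "inj_on (\<lambda>(g, k). rotate k (True # g)) (dyck n \<times> {..<2 * n + 1})"
proof (intro inj_onI, clarify)
  let ?L = "2 * n + 1"
  fix g k g' k'
  assume g: "g \<in> dyck n" "k < ?L" and g': "g' \<in> dyck n" "k' < ?L"
    and eq: "rotate k (True # g) = rotate k' (True # g')"
  have len: "length (True # g) = ?L" "length (True # g') = ?L"
    using g g' by (simp_all add: dyck_length)
  have "k = k'"
  proof (cases "k' \<le> k")
    case True
    then have "rotate (k - k') (True # g) = True # g'"
      using rotate_cancel[OF eq len] g by simp
    then have "k - k' = 0"
      using rotate_Cons_dyck_eq[OF g(1) g'(1), of "k - k'"] g by simp
    with True show ?thesis
      by simp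
  next
    case False
    then have "rotate (k' - k) (True # g') = True # g"
      using rotate_cancel[OF eq[symmetric] len(2,1)] g' by simp
    then have "k' - k = 0"
      using rotate_Cons_dyck_eq[OF g'(1) g(1), of "k' - k"] g' by simp
    with False show ?thesis
      by simp
  qed
  with eq have "g = g'"
    using rotate_cancel[OF _ len, of k k] g by auto
  with \<open>k = k'\<close> show "g = g' \<and> k = k'"
    by simp
qed

lemma bij_betw_rotate_Cons_dyck:
  "bij_betw (\<lambda>(g, k). rotate k (True # g)) (dyck n \<times> {..<2 * n + 1}) (level_one_words n)"
  unfolding bij_betw_def
proof
  show "(\<lambda>(g, k). rotate k (True # g)) ` (dyck n \<times> {..<2 * n + 1}) = level_one_words n"
  proof
    show "(\<lambda>(g, k). rotate k (True # g)) ` (dyck n \<times> {..<2 * n + 1}) \<subseteq> level_one_words n"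
      by (auto simp: level_one_words_def dyck_length level_dyck)
    show "level_one_words n \<subseteq> (\<lambda>(g, k). rotate k (True # g)) ` (dyck n \<times> {..<2 * n + 1})"
      by (force elim: rotate_to_Cons_dyck)
  qed
qed (rule inj_on_rotate_Cons_dyck)

lemma sum_level_one_words:
  fixes f :: "nat \<Rightarrow> real"
  assumes n: "n \<ge> 1"
  shows "(\<Sum>w\<in>level_one_words n. f (ncyclic_valleys w)) =
    real (2 * n + 1) * (\<Sum>g\<in>dyck n. f (nvalleys g + 1))"
proof -
  have "(\<Sum>w\<in>level_one_words n. f (ncyclic_valleys w)) =
      (\<Sum>(g, k)\<in>dyck n \<times> {..<2 * n + 1}. f (ncyclic_valleys (rotate k (True # g))))"
    using sum.reindex_bij_betw[OF bij_betw_rotate_Cons_dyck, of "\<lambda>w. f (ncyclic_valleys w)"]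
    by (simp add: case_prod_beta')
  also have "\<dots> = (\<Sum>(g, k)\<in>dyck n \<times> {..<2 * n + 1}. f (nvalleys g + 1))"
    by (intro sum.cong refl) (auto simp: ncyclic_valleys_Cons_dyck[OF _ n])
  also have "\<dots> = (\<Sum>g\<in>dyck n. \<Sum>k<2 * n + 1. f (nvalleys g + 1))"
    by (rule sum.cartesian_product[symmetric])
  finally show ?thesis
    by (simp add: sum_distrib_left)
qed

section \<open>Counting cyclic valleys of subsets\<close>

definition up_positions :: "bool list \<Rightarrow> nat set" where
  "up_positions w = {i. i < length w \<and> w ! i}"

definition up_sets :: "nat \<Rightarrow> nat set set" where
  "up_sets n = {S. S \<subseteq> {..<2 * n + 1} \<and> card S = n + 1}"

definition cyclic_valley_at :: "nat \<Rightarrow> nat set \<Rightarrow> nat \<Rightarrow> bool" where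
  "cyclic_valley_at L S i \<longleftrightarrow> i \<notin> S \<and> Suc i mod L \<in> S"

definition ncyclic_valleys_set :: "nat \<Rightarrow> nat set \<Rightarrow> nat" where
  "ncyclic_valleys_set L S = card {i. i < L \<and> cyclic_valley_at L S i}"

lemma level_eq_card_up_positions: "level w = 2 * int (card (up_positions w)) - int (length w)"
proof -
  have "level w = 2 * int (length (filter id w)) - int (length w)"
    by (induction w) auto
  then show ?thesis
    by (simp add: length_filter_conv_card up_positions_def)
qed

lemma bij_betw_up_positions: "bij_betw up_positions (level_one_words n) (up_sets n)"
proof (rule bij_betw_byWitness[where f' = "\<lambda>S. map (\<lambda>i. i \<in> S) [0..<2 * n + 1]"])
  show "\<forall>w\<in>level_one_words n. map (\<lambda>i. i \<in> up_positions w) [0..<2 * n + 1] = w"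
    by (auto simp: level_one_words_def up_positions_def intro: nth_equalityI simp del: upt_Suc)
  show "\<forall>S\<in>up_sets n. up_positions (map (\<lambda>i. i \<in> S) [0..<2 * n + 1]) = S"
    by (auto simp: up_sets_def up_positions_def simp del: upt_Suc)
  show "up_positions ` level_one_words n \<subseteq> up_sets n"
    by (auto simp: level_one_words_def up_sets_def level_eq_card_up_positions)
      (auto simp: up_positions_def)
  have "up_positions (map (\<lambda>i. i \<in> S) [0..<2 * n + 1]) = S" if "S \<in> up_sets n" for S
    using that by (auto simp: up_sets_def up_positions_def simp del: upt_Suc)
  then show "(\<lambda>S. map (\<lambda>i. i \<in> S) [0..<2 * n + 1]) ` up_sets n \<subseteq> level_one_words n"
    by (auto simp: level_one_words_def level_eq_card_up_positions up_sets_def simp del: upt_Suc)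
qed

lemma ncyclic_valleys_eq_set:
  "ncyclic_valleys w = ncyclic_valleys_set (length w) (up_positions w)"
  unfolding ncyclic_valleys_def ncyclic_valleys_set_def cyclic_valley_at_def up_positions_def
  by (intro arg_cong[where f = card]) (auto intro: mod_less_divisor)

lemma sum_level_one_words_eq_up_sets:
  "(\<Sum>w\<in>level_one_words n. f (ncyclic_valleys w)) =
    (\<Sum>S\<in>up_sets n. f (ncyclic_valleys_set (2 * n + 1) S))"
  using sum.reindex_bij_betw[OF bij_betw_up_positions, of "\<lambda>S. f (ncyclic_valleys_set (2 * n + 1) S)"]
  by (simp add: ncyclic_valleys_eq_set level_one_words_def)

lemma card_subsets_containing_avoiding:
  assumes U: "finite U" and X: "X \<subseteq> U" and Y: "Y \<subseteq> U" and XY: "X \<inter> Y = {}" and k: "card X \<le> k"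
  shows "card {S. S \<subseteq> U \<and> card S = k \<and> X \<subseteq> S \<and> S \<inter> Y = {}} =
      (card U - card X - card Y) choose (k - card X)"
proof -
  have fin: "finite X" "finite Y"
    using U X Y finite_subset by blast+
  have "bij_betw (\<lambda>T. T \<union> X) {T. T \<subseteq> U - X - Y \<and> card T = k - card X}
      {S. S \<subseteq> U \<and> card S = k \<and> X \<subseteq> S \<and> S \<inter> Y = {}}"
  proof (rule bij_betw_byWitness[where f' = "\<lambda>S. S - X"])
    show "(\<lambda>T. T \<union> X) ` {T. T \<subseteq> U - X - Y \<and> card T = k - card X} \<subseteq>
        {S. S \<subseteq> U \<and> card S = k \<and> X \<subseteq> S \<and> S \<inter> Y = {}}"
    proof
      fix S assume "S \<in> (\<lambda>T. T \<union> X) ` {T. T \<subseteq> U - X - Y \<and> card T = k - card X}"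
      then obtain T where T: "T \<subseteq> U - X - Y" "card T = k - card X" "S = T \<union> X"
        by auto
      moreover have "finite T"
        using T(1) U finite_subset by blast
      moreover have "T \<inter> X = {}"
        using T(1) by blast
      ultimately show "S \<in> {S. S \<subseteq> U \<and> card S = k \<and> X \<subseteq> S \<and> S \<inter> Y = {}}"
        using X XY k fin by (auto simp: card_Un_disjoint)
    qed
    show "(\<lambda>S. S - X) ` {S. S \<subseteq> U \<and> card S = k \<and> X \<subseteq> S \<and> S \<inter> Y = {}} \<subseteq>
        {T. T \<subseteq> U - X - Y \<and> card T = k - card X}"
      using fin by (auto simp: card_Diff_subset)
  qed auto
  then have "card {S. S \<subseteq> U \<and> card S = k \<and> X \<subseteq> S \<and> S \<inter> Y = {}} =
      card (U - X - Y) choose (k - card X)"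
    using n_subsets[of "U - X - Y" "k - card X"] U by (simp add: bij_betw_same_card[symmetric])
  moreover have "card (U - X - Y) = card U - card X - card Y"
  proof -
    have "Y \<subseteq> U - X"
      using Y XY by blast
    then show ?thesis
      using X fin by (simp add: card_Diff_subset)
  qed
  ultimately show ?thesis
    by simp
qed

lemma finite_up_sets: "finite (up_sets n)"
  by (rule finite_subset[of _ "Pow {..<2 * n + 1}"]) (auto simp: up_sets_def)

lemma card_up_sets: "card (up_sets n) = (2 * n + 1) choose (n + 1)"
  using n_subsets[of "{..<2 * n + 1}" "n + 1"] by (simp add: up_sets_def)

lemma Suc_mod_neq: "2 \<le> L \<Longrightarrow> i < L \<Longrightarrow> Suc i mod L \<noteq> i"
  by (auto simp: mod_Suc)

lemma Suc_mod_inj: "i < L \<Longrightarrow> j < L \<Longrightarrow> Suc i mod L = Suc j mod L \<Longrightarrow> i = j"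
  by (auto simp: mod_Suc split: if_splits)

lemma card_up_sets_valley_at:
  assumes n: "n \<ge> 1" and i: "i < 2 * n + 1"
  shows "card {S\<in>up_sets n. cyclic_valley_at (2 * n + 1) S i} = (2 * n - 1) choose n"
proof -
  let ?L = "2 * n + 1"
  have "{S\<in>up_sets n. cyclic_valley_at ?L S i} =
      {S. S \<subseteq> {..<?L} \<and> card S = n + 1 \<and> {Suc i mod ?L} \<subseteq> S \<and> S \<inter> {i} = {}}"
    by (auto simp: up_sets_def cyclic_valley_at_def)
  also have "card \<dots> = (2 * n - 1) choose n"
    using card_subsets_containing_avoiding[of "{..<?L}" "{Suc i mod ?L}" "{i}" "n + 1"]
      Suc_mod_neq[of ?L i] n i by simp
  finally show ?thesis .
qed

lemma card_up_sets_two_valleys_at: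
  assumes n: "n \<ge> 2" and i: "i < 2 * n + 1" and j: "j < 2 * n + 1" and ij: "i \<noteq> j"
    and not_adj: "j \<noteq> Suc i mod (2 * n + 1)" "i \<noteq> Suc j mod (2 * n + 1)"
  shows "card {S\<in>up_sets n. cyclic_valley_at (2 * n + 1) S i \<and> cyclic_valley_at (2 * n + 1) S j} =
    (2 * n - 3) choose (n - 1)"
proof -
  let ?L = "2 * n + 1"
  have "Suc i mod ?L \<noteq> Suc j mod ?L"
    using Suc_mod_inj[OF i j] ij by blast
  moreover have "Suc i mod ?L \<noteq> i" "Suc j mod ?L \<noteq> j"
    using Suc_mod_neq[of ?L] n i j by auto
  moreover have "{S\<in>up_sets n. cyclic_valley_at ?L S i \<and> cyclic_valley_at ?L S j} =
      {S. S \<subseteq> {..<?L} \<and> card S = n + 1 \<and> {Suc i mod ?L, Suc j mod ?L} \<subseteq> S \<and> S \<inter> {i, j} = {}}"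
    by (auto simp: up_sets_def cyclic_valley_at_def)
  ultimately show ?thesis
    using card_subsets_containing_avoiding[of "{..<?L}" "{Suc i mod ?L, Suc j mod ?L}" "{i, j}" "n + 1"]
      i j ij not_adj n by (simp add: numeral_3_eq_3)
qed

lemma real_card_filter_eq_sum:
  "finite A \<Longrightarrow> real (card {x\<in>A. P x}) = (\<Sum>x\<in>A. if P x then 1 else 0)"
  by (simp add: sum.inter_filter[symmetric])

lemma real_ncyclic_valleys_set:
  "real (ncyclic_valleys_set L S) = (\<Sum>i<L. if cyclic_valley_at L S i then 1 else 0)"
  using real_card_filter_eq_sum[of "{..<L}" "cyclic_valley_at L S"]
  by (simp add: ncyclic_valleys_set_def lessThan_def Collect_conj_eq[symmetric])

lemma sum_eq_three_special:
  fixes f :: "'a \<Rightarrow> real"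
  assumes U: "finite U" "i \<in> U" "a \<in> U" "b \<in> U" and distinct: "i \<noteq> a" "i \<noteq> b" "a \<noteq> b"
    and zero: "f a = 0" "f b = 0" and const: "\<And>j. j \<in> U \<Longrightarrow> j \<notin> {i, a, b} \<Longrightarrow> f j = B"
  shows "sum f U = f i + (real (card U) - 3) * B"
proof -
  have "sum f U = sum f (U - {i, a, b}) + sum f {i, a, b}"
    using U by (intro sum.subset_diff) auto
  also have "sum f (U - {i, a, b}) = real (card (U - {i, a, b})) * B"
    using const by simp
  also have "card (U - {i, a, b}) = card U - 3"
    using U distinct by (simp add: card_Diff_subset)
  also have "sum f {i, a, b} = f i"
    using distinct zero by simp
  finally show ?thesis
    using U distinct card_mono[of U "{i, a, b}"] by (simp add: of_nat_diff)
qed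

lemma sum_ncyclic_valleys_set:
  assumes n: "n \<ge> 1"
  shows "(\<Sum>S\<in>up_sets n. real (ncyclic_valleys_set (2 * n + 1) S)) =
    real (2 * n + 1) * real ((2 * n - 1) choose n)"
proof -
  let ?L = "2 * n + 1"
  have "(\<Sum>S\<in>up_sets n. real (ncyclic_valleys_set ?L S)) =
      (\<Sum>i<?L. \<Sum>S\<in>up_sets n. if cyclic_valley_at ?L S i then 1 else 0)"
    unfolding real_ncyclic_valleys_set by (rule sum.swap)
  also have "\<dots> = (\<Sum>i<?L. real ((2 * n - 1) choose n))"
    using card_up_sets_valley_at[OF n]
    by (intro sum.cong refl) (simp add: real_card_filter_eq_sum[symmetric] finite_up_sets)
  finally show ?thesis
    by simp
qed

text \<open>Valleys at i and j are incompatible exactly when j is a cyclic neighbour of i, and each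
  of the remaining 2 n - 2 positions j \<noteq> i contributes the same count.\<close>

lemma sum_card_up_sets_two_valleys_at:
  assumes n: "n \<ge> 2" and i: "i < 2 * n + 1"
  shows "(\<Sum>j<2 * n + 1. real (card
      {S\<in>up_sets n. cyclic_valley_at (2 * n + 1) S i \<and> cyclic_valley_at (2 * n + 1) S j})) =
    real ((2 * n - 1) choose n) + (real (2 * n + 1) - 3) * real ((2 * n - 3) choose (n - 1))"
proof -
  let ?L = "2 * n + 1"
  let ?V = "cyclic_valley_at ?L"
  define c where "c j = real (card {S\<in>up_sets n. ?V S i \<and> ?V S j})" for j
  define p where "p = (if i = 0 then 2 * n else i - 1)"
  have p: "p < ?L" "Suc p mod ?L = i"
    using i by (auto simp: p_def mod_Suc)
  have distinct: "i \<noteq> Suc i mod ?L" "i \<noteq> p" "Suc i mod ?L \<noteq> p"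
    using i n by (auto simp: p_def mod_Suc)
  have "(\<Sum>j<?L. c j) = c i + (real (card {..<?L}) - 3) * real ((2 * n - 3) choose (n - 1))"
  proof (rule sum_eq_three_special[where a = "Suc i mod ?L" and b = p])
    have "{S\<in>up_sets n. ?V S i \<and> ?V S (Suc i mod ?L)} = {}" "{S\<in>up_sets n. ?V S i \<and> ?V S p} = {}"
      using p(2) by (auto simp: cyclic_valley_at_def)
    then show "c (Suc i mod ?L) = 0" "c p = 0"
      by (simp_all only: c_def card.empty of_nat_0)
    fix j assume "j \<in> {..<?L}" "j \<notin> {i, Suc i mod ?L, p}"
    moreover have "i \<noteq> Suc j mod ?L" if "j \<noteq> p" "j < ?L"
      using Suc_mod_inj[of j ?L p] p that by auto
    ultimately show "c j = real ((2 * n - 3) choose (n - 1))"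
      using card_up_sets_two_valleys_at[OF n i, of j] by (simp add: c_def)
  qed (use i p distinct in auto)
  also have "\<dots> = real ((2 * n - 1) choose n) + (real ?L - 3) * real ((2 * n - 3) choose (n - 1))"
    using card_up_sets_valley_at[of n i] n i by (simp add: c_def)
  finally show ?thesis
    by (simp add: c_def)
qed

lemma sum_ncyclic_valleys_set_sq:
  assumes n: "n \<ge> 2"
  shows "(\<Sum>S\<in>up_sets n. real (ncyclic_valleys_set (2 * n + 1) S) ^ 2) =
    real (2 * n + 1) *
      (real ((2 * n - 1) choose n) + (real (2 * n + 1) - 3) * real ((2 * n - 3) choose (n - 1)))"
proof -
  let ?L = "2 * n + 1"
  let ?V = "cyclic_valley_at ?L"
  have "(\<Sum>S\<in>up_sets n. real (ncyclic_valleys_set ?L S) ^ 2) =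
      (\<Sum>S\<in>up_sets n. \<Sum>i<?L. \<Sum>j<?L. if ?V S i \<and> ?V S j then 1 else 0)"
    unfolding real_ncyclic_valleys_set power2_eq_square sum_product
    by (intro sum.cong refl) simp
  also have "\<dots> = (\<Sum>i<?L. \<Sum>j<?L. real (card {S\<in>up_sets n. ?V S i \<and> ?V S j}))"
    by (subst sum.swap, intro sum.cong refl, subst sum.swap)
      (simp add: real_card_filter_eq_sum finite_up_sets)
  also have "\<dots> =
      (\<Sum>i<?L. real ((2 * n - 1) choose n) + (real ?L - 3) * real ((2 * n - 3) choose (n - 1)))"
    using sum_card_up_sets_two_valleys_at[OF n] by simp
  finally show ?thesis
    by simp
qed

section \<open>Moments of the number of valleys\<close>

lemma sum_dyck_eq_sum_up_sets:
  fixes f :: "nat \<Rightarrow> real"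
  assumes "n \<ge> 1"
  shows "real (2 * n + 1) * (\<Sum>g\<in>dyck n. f (nvalleys g + 1)) =
    (\<Sum>S\<in>up_sets n. f (ncyclic_valleys_set (2 * n + 1) S))"
  using sum_level_one_words[OF assms, of f] sum_level_one_words_eq_up_sets[where f = f] by simp

lemma binomial_odd_step:
  assumes "1 \<le> m"
  shows "((2 * m + 1) choose (m + 1)) * ((m + 1) * m) =
    ((2 * m - 1) choose m) * ((2 * m + 1) * (2 * m))"
proof -
  obtain k where m: "m = Suc k"
    using assms by (cases m) auto
  have top: "(m + 1) * ((2 * m + 1) choose (m + 1)) = (2 * m + 1) * ((2 * m) choose m)"
    using Suc_times_binomial[of m "2 * m"] by simp
  have mid: "m * ((2 * m) choose m) = (2 * m) * ((2 * m - 1) choose m)"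
    using Suc_times_binomial[of k "2 * k + 1"] binomial_symmetric[of k "2 * k + 1"] by (simp add: m)
  have "((2 * m + 1) choose (m + 1)) * ((m + 1) * m) = (2 * m + 1) * (m * ((2 * m) choose m))"
    using top by (metis mult.assoc mult.commute)
  also have "\<dots> = (2 * m + 1) * ((2 * m) * ((2 * m - 1) choose m))"
    by (simp only: mid)
  also have "\<dots> = ((2 * m - 1) choose m) * ((2 * m + 1) * (2 * m))"
    by (simp only: ac_simps)
  finally show ?thesis .
qed

lemma binomial_odd_step_real:
  assumes "1 \<le> m"
  shows "real ((2 * m + 1) choose (m + 1)) * ((real m + 1) * real m) =
    real ((2 * m - 1) choose m) * ((2 * real m + 1) * (2 * real m))"
proof -
  have "real (((2 * m + 1) choose (m + 1)) * ((m + 1) * m)) =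
      real (((2 * m - 1) choose m) * ((2 * m + 1) * (2 * m)))"
    using binomial_odd_step[OF assms] by (simp only:)
  then show ?thesis
    by (simp only: of_nat_mult of_nat_add of_nat_1 of_nat_numeral)
qed

definition valley_mean :: "real \<Rightarrow> real" where
  "valley_mean x = (x - 1) / 2"

definition valley_second_moment :: "real \<Rightarrow> real" where
  "valley_second_moment x = (x - 1) * (x ^ 2 - x + 1) / (2 * (2 * x - 1))"

text \<open>Here N counts Dyck paths, S1 and S2 are the power sums of their numbers of valleys and
  A, B are the binomial coefficients produced by counting cyclic valleys.\<close>

lemma valley_moments_from_relations:
  fixes x N A B S1 S2 :: real
  assumes x: "x \<ge> 2" and NA: "N * (x + 1) = 2 * A" and S1: "S1 + N = A"
    and S2: "S2 + 2 * S1 + N = A + (2 * x - 2) * B"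
    and AB: "A * (x * (x - 1)) = B * ((2 * x - 1) * (2 * x - 2))"
  shows "S1 = N * valley_mean x" "S2 = N * valley_second_moment x"
proof -
  have A: "A = N * (x + 1) / 2"
    using NA by simp
  have S1': "S1 = N * (x - 1) / 2"
    using S1 A by (simp add: field_simps)
  then show "S1 = N * valley_mean x"
    by (simp add: valley_mean_def)
  have AB': "(2 * x - 2) * B * (2 * x - 1) = A * x * (x - 1)"
    using AB by (simp add: algebra_simps)
  have "S2 = (A - 2 * S1 - N) + (2 * x - 2) * B"
    using S2 by simp
  then have "S2 * (2 * x - 1) = ((A - 2 * S1 - N) + (2 * x - 2) * B) * (2 * x - 1)"
    by simp
  also have "\<dots> = (A - 2 * S1 - N) * (2 * x - 1) + (2 * x - 2) * B * (2 * x - 1)"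
    by (simp add: algebra_simps)
  also have "\<dots> = (A - 2 * S1 - N) * (2 * x - 1) + A * x * (x - 1)"
    by (simp only: AB')
  also have "\<dots> = N * ((x - 1) * (x ^ 2 - x + 1)) / 2"
    unfolding S1' A by (simp add: field_simps power2_eq_square)
  finally show "S2 = N * valley_second_moment x"
    using x by (simp add: valley_second_moment_def field_simps)
qed

lemma dyck_nvalleys_moments:
  assumes n: "n \<ge> 2"
  shows "0 < real (card (dyck n))"
    and "(\<Sum>g\<in>dyck n. real (nvalleys g)) = real (card (dyck n)) * valley_mean (real n)"
    and "(\<Sum>g\<in>dyck n. real (nvalleys g) ^ 2) = real (card (dyck n)) * valley_second_moment (real n)"
proof -
  let ?N = "real (card (dyck n))"
  let ?A = "real ((2 * n - 1) choose n)"
  let ?B = "real ((2 * n - 3) choose (n - 1))"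
  let ?S1 = "\<Sum>g\<in>dyck n. real (nvalleys g)"
  let ?S2 = "\<Sum>g\<in>dyck n. real (nvalleys g) ^ 2"
  have n1: "n \<ge> 1"
    using n by simp
  have L: "real (2 * n + 1) \<noteq> 0"
    by simp
  have count: "real (2 * n + 1) * ?N = real ((2 * n + 1) choose (n + 1))"
    using sum_dyck_eq_sum_up_sets[OF n1, of "\<lambda>_. 1"] by (simp add: card_up_sets)
  have "real (2 * n + 1) * (?S1 + ?N) = real (2 * n + 1) * ?A"
    using sum_dyck_eq_sum_up_sets[OF n1, of real] sum_ncyclic_valleys_set[OF n1]
    by (simp add: sum.distrib)
  then have S1: "?S1 + ?N = ?A"
    using L by simp
  have "real (2 * n + 1) * (?S2 + 2 * ?S1 + ?N) = real (2 * n + 1) * (?A + (2 * real n - 2) * ?B)"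
    using sum_dyck_eq_sum_up_sets[OF n1, of "\<lambda>k. real k ^ 2"] sum_ncyclic_valleys_set_sq[OF n]
    by (simp add: power2_eq_square algebra_simps sum.distrib sum_distrib_left)
  then have S2: "?S2 + 2 * ?S1 + ?N = ?A + (2 * real n - 2) * ?B"
    using L by simp
  have "real (2 * n + 1) * ?N * ((real n + 1) * real n) = ?A * ((2 * real n + 1) * (2 * real n))"
    unfolding count by (rule binomial_odd_step_real[OF n1])
  then have "(2 * real n + 1) * real n * (?N * (real n + 1)) = (2 * real n + 1) * real n * (2 * ?A)"
    by (simp only: of_nat_add of_nat_mult of_nat_numeral of_nat_1 ac_simps)
  then have NA: "?N * (real n + 1) = 2 * ?A"
    using n by (subst (asm) mult_left_cancel) auto
  have AB: "?A * (real n * (real n - 1)) = ?B * ((2 * real n - 1) * (2 * real n - 2))"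
    using binomial_odd_step_real[of "n - 1"] n
    by (simp add: of_nat_diff algebra_simps numeral_3_eq_3 Suc_diff_Suc)
  have "0 < ?N * (real n + 1)"
    using NA n by simp
  then show "0 < ?N"
    by (simp add: zero_less_mult_iff)
  show "?S1 = ?N * valley_mean (real n)" "?S2 = ?N * valley_second_moment (real n)"
    using valley_moments_from_relations[OF _ NA S1 S2 AB] n by simp_all
qed

section \<open>Asymptotics of the Hasse index\<close>

text \<open>A cubic v^3 is squeezed between its second-order Taylor expansions at the mean, with the
  cubic remainder d^3 bounded by K d^2 when the deviation d is at most K.\<close>

lemma sum_cube_bounds:
  fixes v :: "'a \<Rightarrow> real"
  assumes N: "N = real (card D)" "N > 0"
    and S1: "(\<Sum>g\<in>D. v g) = N * \<mu>" and S2: "(\<Sum>g\<in>D. v g ^ 2) = N * m2"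
    and K: "\<And>g. g \<in> D \<Longrightarrow> \<bar>v g - \<mu>\<bar> \<le> K"
  shows "(\<Sum>g\<in>D. v g ^ 3) / N \<le> \<mu> ^ 3 + (3 * \<mu> + K) * (m2 - \<mu> ^ 2)"
    and "\<mu> ^ 3 + (3 * \<mu> - K) * (m2 - \<mu> ^ 2) \<le> (\<Sum>g\<in>D. v g ^ 3) / N"
proof -
  define T where "T c g = \<mu> ^ 3 + 3 * \<mu> ^ 2 * (v g - \<mu>) + c * (v g - \<mu>) ^ 2" for c g
  have pointwise: "T (3 * \<mu> - K) g \<le> v g ^ 3 \<and> v g ^ 3 \<le> T (3 * \<mu> + K) g" if "g \<in> D" for g
  proof -
    define d where "d = v g - \<mu>"
    have "- K \<le> d" "d \<le> K"
      using K[OF that] by (auto simp: d_def abs_le_iff)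
    then have "d * d ^ 2 \<le> K * d ^ 2" "- K * d ^ 2 \<le> d * d ^ 2"
      by (simp_all only: mult_right_mono zero_le_power2)
    moreover have "v g ^ 3 = \<mu> ^ 3 + 3 * \<mu> ^ 2 * d + 3 * \<mu> * d ^ 2 + d * d ^ 2"
      by (simp add: d_def power2_eq_square power3_eq_cube algebra_simps)
    ultimately show ?thesis
      by (simp add: T_def d_def[symmetric] algebra_simps)
  qed
  have sum_T: "(\<Sum>g\<in>D. T c g) = N * (\<mu> ^ 3 + c * (m2 - \<mu> ^ 2))" for c
  proof -
    have "T c g = (c * \<mu> ^ 2 - 2 * \<mu> ^ 3) + (3 * \<mu> ^ 2 - 2 * c * \<mu>) * v g + c * v g ^ 2" for g
      by (simp add: T_def power2_eq_square power3_eq_cube algebra_simps)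
    then have "(\<Sum>g\<in>D. T c g) =
        N * (c * \<mu> ^ 2 - 2 * \<mu> ^ 3) + (3 * \<mu> ^ 2 - 2 * c * \<mu>) * (\<Sum>g\<in>D. v g) + c * (\<Sum>g\<in>D. v g ^ 2)"
      by (simp add: sum.distrib sum_distrib_left N(1))
    then show ?thesis
      unfolding S1 S2 by (simp add: power2_eq_square power3_eq_cube algebra_simps)
  qed
  have "N * (\<mu> ^ 3 + (3 * \<mu> - K) * (m2 - \<mu> ^ 2)) \<le> (\<Sum>g\<in>D. v g ^ 3)"
    "(\<Sum>g\<in>D. v g ^ 3) \<le> N * (\<mu> ^ 3 + (3 * \<mu> + K) * (m2 - \<mu> ^ 2))"
    unfolding sum_T[symmetric] using pointwise by (auto intro: sum_mono)
  then show "(\<Sum>g\<in>D. v g ^ 3) / N \<le> \<mu> ^ 3 + (3 * \<mu> + K) * (m2 - \<mu> ^ 2)"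
    "\<mu> ^ 3 + (3 * \<mu> - K) * (m2 - \<mu> ^ 2) \<le> (\<Sum>g\<in>D. v g ^ 3) / N"
    using N(2) by (simp_all add: field_simps)
qed

lemma sum_cubic_expand:
  fixes v :: "'a \<Rightarrow> real"
  shows "(\<Sum>g\<in>D. v g * (v g + 1) * (v g + 2)) =
      (\<Sum>g\<in>D. v g ^ 3) + 3 * (\<Sum>g\<in>D. v g ^ 2) + 2 * (\<Sum>g\<in>D. v g)" (is ?rising)
    and "(\<Sum>g\<in>D. v g * (v g - 1) * (v g - 2)) =
      (\<Sum>g\<in>D. v g ^ 3) - 3 * (\<Sum>g\<in>D. v g ^ 2) + 2 * (\<Sum>g\<in>D. v g)" (is ?falling)
proof -
  have "v g * (v g + 1) * (v g + 2) = v g ^ 3 + 3 * v g ^ 2 + 2 * v g"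
    "v g * (v g - 1) * (v g - 2) = v g ^ 3 - 3 * v g ^ 2 + 2 * v g" for g
    by (simp_all add: power2_eq_square power3_eq_cube algebra_simps)
  then show ?rising ?falling
    by (simp_all add: sum.distrib sum_subtractf sum_distrib_left)
qed

lemma nvalleys_deviation_le:
  assumes "g \<in> dyck n" "n \<ge> 2"
  shows "\<bar>real (nvalleys g) - valley_mean (real n)\<bar> \<le> 2 * real n"
proof -
  have "nvalleys g \<le> 2 * n"
    using nvalleys_le_length[of g] assms(1) by (simp add: dyck_length)
  then have "real (nvalleys g) \<le> 2 * real n"
    by linarith
  moreover have "2 \<le> real n" "0 \<le> real (nvalleys g)"
    using assms(2) by simp_all
  ultimately show ?thesis
    unfolding valley_mean_def by (simp add: abs_le_iff field_simps)
qed

text \<open>Third moment estimate of sum_cube_bounds with K = 2 n, plus the lower order terms of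
  v (v + 1) (v + 2) and v (v - 1) (v - 2).\<close>

definition dyck_hasse_3_upper :: "real \<Rightarrow> real" where
  "dyck_hasse_3_upper x = valley_mean x ^ 3 +
    (3 * valley_mean x + 2 * x) * (valley_second_moment x - valley_mean x ^ 2) +
    3 * valley_second_moment x + 2 * valley_mean x"

definition dyck_hasse_3_lower :: "real \<Rightarrow> real" where
  "dyck_hasse_3_lower x = valley_mean x ^ 3 +
    (3 * valley_mean x - 2 * x) * (valley_second_moment x - valley_mean x ^ 2) -
    3 * valley_second_moment x + 2 * valley_mean x"

lemma hasse_index_dyck_bounds:
  assumes n: "n \<ge> 2"
  shows "dyck_hasse_3_lower (real n) \<le> hasse_index (dyck n) dyck_lt 3"
    and "hasse_index (dyck n) dyck_lt 3 \<le> dyck_hasse_3_upper (real n)"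
proof -
  let ?N = "real (card (dyck n))"
  let ?v = "\<lambda>g. real (nvalleys g)"
  let ?\<mu> = "valley_mean (real n)"
  let ?m2 = "valley_second_moment (real n)"
  let ?S3 = "\<Sum>g\<in>dyck n. ?v g ^ 3"
  note moments = dyck_nvalleys_moments[OF n]
  note cubes = sum_cube_bounds[OF refl moments nvalleys_deviation_le[OF _ n]]
  note sc = sc_3_bounds[OF finite_dyck card_upper_covers_dyck nvalleys_covers, of n]
  have "hasse_index (dyck n) dyck_lt 3 \<le> (\<Sum>g\<in>dyck n. ?v g * (?v g + 1) * (?v g + 2)) / ?N"
    using sc(2) moments(1) by (simp add: hasse_index_def divide_right_mono)
  also have "\<dots> = ?S3 / ?N + 3 * ?m2 + 2 * ?\<mu>"
    using moments unfolding sum_cubic_expand by (simp add: field_simps)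
  also have "\<dots> \<le> dyck_hasse_3_upper (real n)"
    using cubes(1) by (simp add: dyck_hasse_3_upper_def)
  finally show "hasse_index (dyck n) dyck_lt 3 \<le> dyck_hasse_3_upper (real n)" .
  have "dyck_hasse_3_lower (real n) \<le> ?S3 / ?N - 3 * ?m2 + 2 * ?\<mu>"
    using cubes(2) by (simp add: dyck_hasse_3_lower_def)
  also have "\<dots> = (\<Sum>g\<in>dyck n. ?v g * (?v g - 1) * (?v g - 2)) / ?N"
    using moments unfolding sum_cubic_expand by (simp add: field_simps)
  also have "\<dots> \<le> hasse_index (dyck n) dyck_lt 3"
    using sc(1) moments(1) by (simp add: hasse_index_def divide_right_mono)
  finally show "dyck_hasse_3_lower (real n) \<le> hasse_index (dyck n) dyck_lt 3" .
qed

lemma dyck_hasse_3_upper_asymp: "((\<lambda>n. dyck_hasse_3_upper (real n) / (real n ^ 3 / 8)) \<longlongrightarrow> 1) at_top"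
  unfolding dyck_hasse_3_upper_def valley_mean_def valley_second_moment_def
  by real_asymp (simp add: power2_eq_square power3_eq_cube)

lemma dyck_hasse_3_lower_asymp: "((\<lambda>n. dyck_hasse_3_lower (real n) / (real n ^ 3 / 8)) \<longlongrightarrow> 1) at_top"
  unfolding dyck_hasse_3_lower_def valley_mean_def valley_second_moment_def
  by real_asymp (simp add: power2_eq_square power3_eq_cube)

theorem mainTheorem9:
  shows "(\<lambda>n. hasse_index (dyck n) dyck_lt 3) \<sim>[at_top] (\<lambda>n. real n ^ 3 / 8)"
proof (rule asymp_equivI')
  have "eventually (\<lambda>n. dyck_hasse_3_lower (real n) / (real n ^ 3 / 8) \<le>
      hasse_index (dyck n) dyck_lt 3 / (real n ^ 3 / 8) \<and>
      hasse_index (dyck n) dyck_lt 3 / (real n ^ 3 / 8) \<le> dyck_hasse_3_upper (real n) / (real n ^ 3 / 8)) at_top"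
    using eventually_ge_at_top[of "2::nat"]
    by eventually_elim (use hasse_index_dyck_bounds in \<open>auto intro: divide_right_mono\<close>)
  then show "((\<lambda>n. hasse_index (dyck n) dyck_lt 3 / (real n ^ 3 / 8)) \<longlongrightarrow> 1) at_top"
    by (intro tendsto_sandwich[OF _ _ dyck_hasse_3_lower_asymp dyck_hasse_3_upper_asymp])
      (auto elim: eventually_mono)
qed

end
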